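(* Let $n\ge 1$, let $\mu,\nu\in\mathbb{R}^n$ be probability vectors, let $\gamma>0$, and let $\phi$ satisfy the Bregman assumption stated in the context. Then for every $\hat X\in\mathcal{T}_\phi(\mu,\nu)$ there exists $C\in\mathbb{R}_+^{n\times n}$ with $\mathcal{F}(C)=\hat X$; that is, the map $\mathcal{F}:\mathbb{R}_+^{n\times n}\to\mathcal{T}_\phi(\mu,\nu)$ is a surjection.
   Context: Probability vectors are vectors with nonnegative entries summing to $1$. $\mathcal{U}(\mu,\nu):=\{X\in\mathbb{R}_+^{n\times n}: X\mathbf{1}=\mu,\ X^\top\mathbf{1}=\nu\}$. Bregman assumption on $\phi:\mathbb{R}\to(-\infty,+\infty]$: its effective domain $I=\operatorname{dom}\phi$ is an interval with $(0,1)\subseteq\operatorname{int}(I)$; $\phi$ is of Legendre type (proper, closed, strictly convex on $\operatorname{int}(\operatorname{dom}\phi)$, and essentially smooth, i.e. differentiable on the nonempty interior of its domain with $|\phi'(x_k)|\to\infty$ whenever $x_k\in\operatorname{int}(\operatorname{dom}\phi)$ converges to a boundary point of the domain); and $\phi$ is $C^1$ on $\operatorname{int}(I)$. For a matrix $X$ with entries in $I$, $\phi(X):=\sum_{i,j}\phi(X_{ij})$. For a cost matrix $C$, $\mathcal{F}(C):=\arg\min_{X\in\mathcal{U}(\mu,\nu)}\{\langle C,X\rangle+\gamma\phi(X)\}$ (the unique minimizer). Set $\phi'_0:=\lim_{x\to0^+}\phi'(x)$ and $\phi'_1:=\lim_{x\to1^-}\phi'(x)$, with values in $[-\infty,+\infty]$.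 The target set is $\mathcal{T}_\phi(\mu,\nu):=\mathcal{U}(\mu,\nu)$ if $\phi'_0,\phi'_1$ are both finite; $\mathcal{U}(\mu,\nu)\cap(0,1]^{n\times n}$ if $\phi'_0=-\infty$ and $\phi'_1$ is finite; $\mathcal{U}(\mu,\nu)\cap[0,1)^{n\times n}$ if $\phi'_0$ is finite and $\phi'_1=+\infty$; $\mathcal{U}(\mu,\nu)\cap(0,1)^{n\times n}$ if $\phi'_0=-\infty$ and $\phi'_1=+\infty$. *)

theory Defs
  imports "HOL-Analysis.Analysis"
begin

definition edom :: "(real \<Rightarrow> ereal) \<Rightarrow> real set" where
  "edom \<phi> = {x. \<phi> x \<noteq> \<infinity>}"

text \<open>Real part of phi (meaningful on its effective domain).\<close>
definition rphi :: "(real \<Rightarrow> ereal) \<Rightarrow> real \<Rightarrow> real" where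
  "rphi \<phi> = (\<lambda>x. real_of_ereal (\<phi> x))"

definition proper_fun :: "(real \<Rightarrow> ereal) \<Rightarrow> bool" where
  "proper_fun \<phi> \<longleftrightarrow> (\<forall>x. \<phi> x \<noteq> -\<infinity>) \<and> edom \<phi> \<noteq> {}"

definition closed_fun :: "(real \<Rightarrow> ereal) \<Rightarrow> bool" where
  "closed_fun \<phi> \<longleftrightarrow> closed {(x, t::real). \<phi> x \<le> ereal t}"

definition convex_fun :: "(real \<Rightarrow> ereal) \<Rightarrow> bool" where
  "convex_fun \<phi> \<longleftrightarrow> convex {(x, t::real). \<phi> x \<le> ereal t}"

definition strictly_convex_on_int_dom :: "(real \<Rightarrow> ereal) \<Rightarrow> bool" where
  "strictly_convex_on_int_dom \<phi> \<longleftrightarrow>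
     (\<forall>x\<in>interior (edom \<phi>). \<forall>y\<in>interior (edom \<phi>). x \<noteq> y \<longrightarrow>
        (\<forall>u::real. 0 < u \<and> u < 1 \<longrightarrow>
           rphi \<phi> (u * x + (1 - u) * y) < u * rphi \<phi> x + (1 - u) * rphi \<phi> y))"

definition essentially_smooth :: "(real \<Rightarrow> ereal) \<Rightarrow> bool" where
  "essentially_smooth \<phi> \<longleftrightarrow>
     interior (edom \<phi>) \<noteq> {} \<and>
     (\<forall>x\<in>interior (edom \<phi>). rphi \<phi> differentiable (at x)) \<and>
     (\<forall>b\<in>frontier (edom \<phi>). \<forall>s::nat \<Rightarrow> real.
        (\<forall>k. s k \<in> interior (edom \<phi>)) \<longrightarrow> s \<longlonglongrightarrow> b \<longrightarrow>
        filterlim (\<lambda>k. \<bar>deriv (rphi \<phi>) (s k)\<bar>) at_top sequentially)"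

definition legendre_type :: "(real \<Rightarrow> ereal) \<Rightarrow> bool" where
  "legendre_type \<phi> \<longleftrightarrow> proper_fun \<phi> \<and> closed_fun \<phi> \<and> convex_fun \<phi> \<and>
     strictly_convex_on_int_dom \<phi> \<and> essentially_smooth \<phi>"

definition bregman_assumption :: "(real \<Rightarrow> ereal) \<Rightarrow> bool" where
  "bregman_assumption \<phi> \<longleftrightarrow>
     is_interval (edom \<phi>) \<and> {0<..<1} \<subseteq> interior (edom \<phi>) \<and>
     legendre_type \<phi> \<and>
     continuous_on (interior (edom \<phi>)) (deriv (rphi \<phi>)) \<and>
     (\<forall>x\<in>interior (edom \<phi>). rphi \<phi> differentiable (at x))"

definition dphi0 :: "(real \<Rightarrow> ereal) \<Rightarrow> ereal" where
  "dphi0 \<phi> = Lim (at_right 0) (\<lambda>x. ereal (deriv (rphi \<phi>) x))"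

definition dphi1 :: "(real \<Rightarrow> ereal) \<Rightarrow> ereal" where
  "dphi1 \<phi> = Lim (at_left 1) (\<lambda>x. ereal (deriv (rphi \<phi>) x))"

definition prob_vec :: "('n::finite \<Rightarrow> real) \<Rightarrow> bool" where
  "prob_vec p \<longleftrightarrow> (\<forall>i. 0 \<le> p i) \<and> (\<Sum>i\<in>UNIV. p i) = 1"

definition transport_polytope ::
    "('n::finite \<Rightarrow> real) \<Rightarrow> ('n \<Rightarrow> real) \<Rightarrow> ('n \<Rightarrow> 'n \<Rightarrow> real) set" where
  "transport_polytope \<mu> \<nu> = {X. (\<forall>i j. 0 \<le> X i j) \<and>
      (\<forall>i. (\<Sum>j\<in>UNIV. X i j) = \<mu> i) \<and> (\<forall>j. (\<Sum>i\<in>UNIV. X i j) = \<nu> j)}"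

text \<open>Objective <C,X> + gamma * phi(X), with value +infinity if some entry lies
  outside dom phi.\<close>
definition reg_obj ::
    "(real \<Rightarrow> ereal) \<Rightarrow> real \<Rightarrow> ('n::finite \<Rightarrow> 'n \<Rightarrow> real) \<Rightarrow> ('n \<Rightarrow> 'n \<Rightarrow> real) \<Rightarrow> ereal" where
  "reg_obj \<phi> \<gamma> C X = ereal (\<Sum>i\<in>UNIV. \<Sum>j\<in>UNIV. C i j * X i j)
      + ereal \<gamma> * (\<Sum>i\<in>UNIV. \<Sum>j\<in>UNIV. \<phi> (X i j))"

definition Fmap ::
    "(real \<Rightarrow> ereal) \<Rightarrow> real \<Rightarrow> ('n::finite \<Rightarrow> real) \<Rightarrow> ('n \<Rightarrow> real)
      \<Rightarrow> ('n \<Rightarrow> 'n \<Rightarrow> real) \<Rightarrow> ('n \<Rightarrow> 'n \<Rightarrow> real)" where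
  "Fmap \<phi> \<gamma> \<mu> \<nu> C = (THE X. X \<in> transport_polytope \<mu> \<nu> \<and>
      (\<forall>Y\<in>transport_polytope \<mu> \<nu>. reg_obj \<phi> \<gamma> C X \<le> reg_obj \<phi> \<gamma> C Y))"

definition target_set ::
    "(real \<Rightarrow> ereal) \<Rightarrow> ('n::finite \<Rightarrow> real) \<Rightarrow> ('n \<Rightarrow> real) \<Rightarrow> ('n \<Rightarrow> 'n \<Rightarrow> real) set" where
  "target_set \<phi> \<mu> \<nu> =
     (if \<bar>dphi0 \<phi>\<bar> \<noteq> \<infinity> \<and> \<bar>dphi1 \<phi>\<bar> \<noteq> \<infinity> then transport_polytope \<mu> \<nu>
      else if dphi0 \<phi> = -\<infinity> \<and> \<bar>dphi1 \<phi>\<bar> \<noteq> \<infinity> then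
        transport_polytope \<mu> \<nu> \<inter> {X. \<forall>i j. 0 < X i j \<and> X i j \<le> 1}
      else if \<bar>dphi0 \<phi>\<bar> \<noteq> \<infinity> \<and> dphi1 \<phi> = \<infinity> then
        transport_polytope \<mu> \<nu> \<inter> {X. \<forall>i j. 0 \<le> X i j \<and> X i j < 1}
      else if dphi0 \<phi> = -\<infinity> \<and> dphi1 \<phi> = \<infinity> then
        transport_polytope \<mu> \<nu> \<inter> {X. \<forall>i j. 0 < X i j \<and> X i j < 1}
      else {})"

end

theory Submission
  imports Defs
begin

text \<open>Let \<open>X\<close> be in the target set and take the cost \<open>C = K - \<gamma> \<phi>'(X)\<close>, with the constant
  \<open>K\<close> large enough that \<open>C \<ge> 0\<close>. All plans in \<open>U(\<mu>, \<nu>)\<close> have the same total mass, so \<open>K\<close>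
  contributes the same amount to every objective value and the gap between \<open>Y\<close> and \<open>X\<close>
  is \<open>\<gamma>\<close> times the sum of the Bregman divergences \<open>\<phi>(Y\<^sub>i\<^sub>j) - \<phi>(X\<^sub>i\<^sub>j) - \<phi>'(X\<^sub>i\<^sub>j) (Y\<^sub>i\<^sub>j - X\<^sub>i\<^sub>j)\<close>,
  which is positive unless \<open>Y = X\<close>. This needs every entry of \<open>X\<close> in the interior of
  \<open>dom \<phi>\<close>, and that is what the target set guarantees: if \<open>0\<close> were on the boundary of
  \<open>dom \<phi>\<close>, essential smoothness together with the monotonicity of \<open>\<phi>'\<close> would force
  \<open>\<phi>' \<rightarrow> -\<infinity>\<close> at \<open>0\<close>; symmetrically at \<open>1\<close>.\<close>

lemma convex_on_above_tangent_at:
  fixes f :: "real \<Rightarrow> real"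
  assumes "convex_on S f" "convex S" "x \<in> interior S" "y \<in> S"
    and "(f has_real_derivative d) (at x)"
  shows "d * (y - x) \<le> f y - f x"
  using convex_on_imp_above_tangent[OF assms(1) convex_connected[OF assms(2)] assms(3,4)
      has_field_derivative_at_within[OF assms(5)]]
  by simp

lemma convex_on_deriv_mono:
  fixes f :: "real \<Rightarrow> real"
  assumes f: "convex_on S f" "convex S"
    and xy: "x \<in> interior S" "y \<in> interior S" "x \<le> y"
    and dx: "(f has_real_derivative f'x) (at x)" and dy: "(f has_real_derivative f'y) (at y)"
  shows "f'x \<le> f'y"
proof -
  have "f'x * (y - x) \<le> f y - f x" "f'y * (x - y) \<le> f x - f y"
    using xy interior_subset by (auto intro!: convex_on_above_tangent_at[OF f] dx dy)
  then have "0 \<le> (f'y - f'x) * (y - x)" by (simp add: algebra_simps)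
  with xy(3) DERIV_unique[OF dx] dy show ?thesis
    by (cases "x = y") (auto simp: zero_le_mult_iff)
qed

lemma convex_on_strict_above_tangent:
  fixes f :: "real \<Rightarrow> real"
  assumes f: "convex_on S f" "convex S"
    and strict: "\<And>a b u. a \<in> interior S \<Longrightarrow> b \<in> interior S \<Longrightarrow> a \<noteq> b \<Longrightarrow> 0 < u \<Longrightarrow> u < 1 \<Longrightarrow>
                   f (u * a + (1 - u) * b) < u * f a + (1 - u) * f b"
    and x: "x \<in> interior S" and y: "y \<in> S" "y \<noteq> x"
    and d: "(f has_real_derivative d) (at x)"
  shows "d * (y - x) < f y - f x"
proof -
  \<comment> \<open>tangent inequality at \<open>x\<close> towards \<open>p\<close>, strict convexity on \<open>[x, m]\<close>, convexity on \<open>[x, y]\<close>\<close>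
  define m where "m = (x + y) / 2"
  define p where "p = (x + m) / 2"
  have m: "m \<in> interior S"
    using mem_interior_convex_shrink[OF f(2) x y(1), of "1/2"] by (simp add: m_def field_simps)
  have p: "p \<in> interior S"
    using mem_interior_convex_shrink[OF f(2) x subsetD[OF interior_subset m], of "1/2"]
    by (simp add: p_def field_simps)
  have "d * (p - x) \<le> f p - f x"
    using p interior_subset by (auto intro!: convex_on_above_tangent_at[OF f x] d)
  moreover have "f p < (1/2) * f x + (1 - 1/2) * f m"
  proof -
    have "x \<noteq> m" using y(2) by (simp add: m_def field_simps)
    moreover have "(1/2) * x + (1 - 1/2) * m = p" by (simp add: p_def field_simps)
    ultimately show ?thesis using strict[OF x m, of "1/2"] by simp
  qed
  moreover have "f m \<le> (1 - 1/2) * f x + (1/2) * f y"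
  proof -
    have "(1 - 1/2) *\<^sub>R x + (1/2) *\<^sub>R y = m" by (simp add: m_def field_simps)
    then show ?thesis
      using convex_onD[OF f(1), of "1/2" x y] subsetD[OF interior_subset x] y(1) by simp
  qed
  moreover have "d * (p - x) = d * (y - x) / 4" by (simp add: p_def m_def field_simps)
  ultimately show ?thesis by argo
qed

lemma mono_on_tendsto_at_bot_at_right:
  fixes f :: "real \<Rightarrow> real"
  assumes mono: "mono_on {a<..<b} f" and "a < b"
    and unbounded: "\<And>s. (\<And>k. s k \<in> {a<..<b}) \<Longrightarrow> s \<longlonglongrightarrow> a \<Longrightarrow>
                      filterlim (\<lambda>k. \<bar>f (s k)\<bar>) at_top sequentially"
  shows "filterlim f at_bot (at_right a)"
  unfolding filterlim_at_bot
proof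
  fix Z :: real
  define c where "c = (a + b) / 2"
  define s where "s k = a + (c - a) / real (Suc k)" for k
  have c: "c \<in> {a<..<b}" using \<open>a < b\<close> by (simp add: c_def)
  have s: "a < s k" "s k \<le> c" for k
    using c by (auto simp: s_def field_simps intro!: mult_right_mono)
  then have s_in: "s k \<in> {a<..<b}" for k
    using c by (meson greaterThanLessThan_iff le_less_trans)
  have "s \<longlonglongrightarrow> a + 0"
    unfolding s_def by (intro tendsto_add tendsto_const LIMSEQ_Suc[OF lim_const_over_n])
  with s_in have "filterlim (\<lambda>k. \<bar>f (s k)\<bar>) at_top sequentially"
    by (intro unbounded) auto
  then obtain N where N: "\<bar>Z\<bar> + \<bar>f c\<bar> + 1 \<le> \<bar>f (s N)\<bar>"
    unfolding filterlim_at_top eventually_sequentially by blast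
  have "f (s N) \<le> f c"
    using s_in[of N] s(2) c by (intro mono_onD[OF mono]) auto
  with N have "f (s N) \<le> Z" by linarith
  moreover have "f y \<le> f (s N)" if "a < y" "y < s N" for y
    using that s_in[of N] by (intro mono_onD[OF mono]) auto
  ultimately show "eventually (\<lambda>x. f x \<le> Z) (at_right a)"
    unfolding eventually_at_right_field using s(1)[of N] by force
qed

lemma mono_on_tendsto_at_top_at_left:
  fixes f :: "real \<Rightarrow> real"
  assumes mono: "mono_on {a<..<b} f" and "a < b"
    and unbounded: "\<And>s. (\<And>k. s k \<in> {a<..<b}) \<Longrightarrow> s \<longlonglongrightarrow> b \<Longrightarrow>
                      filterlim (\<lambda>k. \<bar>f (s k)\<bar>) at_top sequentially"
  shows "filterlim f at_top (at_left b)"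
proof -
  have "filterlim (\<lambda>x. - f (- x)) at_bot (at_right (- b))"
  proof (rule mono_on_tendsto_at_bot_at_right)
    show "mono_on {- b<..<- a} (\<lambda>x. - f (- x))"
      using mono by (auto simp: mono_on_def)
    show "- b < - a" using \<open>a < b\<close> by simp
  next
    fix s assume s: "\<And>k. s k \<in> {- b<..<- a}" and lim: "s \<longlonglongrightarrow> - b"
    have "- s k \<in> {a<..<b}" for k using s[of k] by auto
    moreover have "(\<lambda>k. - s k) \<longlonglongrightarrow> b" using tendsto_minus[OF lim] by simp
    ultimately have "filterlim (\<lambda>k. \<bar>f (- s k)\<bar>) at_top sequentially"
      by (rule unbounded)
    then show "filterlim (\<lambda>k. \<bar>- f (- s k)\<bar>) at_top sequentially" by simp
  qed
  then show ?thesis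
    unfolding filterlim_at_left_to_right filterlim_uminus_at_bot by simp
qed

lemma abs_le_double_sum_abs:
  fixes f :: "'a::finite \<Rightarrow> 'b::finite \<Rightarrow> real"
  shows "\<bar>f i j\<bar> \<le> (\<Sum>i\<in>UNIV. \<Sum>j\<in>UNIV. \<bar>f i j\<bar>)"
proof -
  have "\<bar>f i j\<bar> \<le> (\<Sum>j\<in>UNIV. \<bar>f i j\<bar>)" by (rule member_le_sum) auto
  also have "\<dots> \<le> (\<Sum>i\<in>UNIV. \<Sum>j\<in>UNIV. \<bar>f i j\<bar>)"
    by (rule member_le_sum) (auto intro: sum_nonneg)
  finally show ?thesis .
qed

lemma bregman_convex_edom:
  assumes "bregman_assumption \<phi>"
  shows "convex (edom \<phi>)"
  using assms is_interval_convex unfolding bregman_assumption_def by blast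

lemma bregman_open_unit_interval_subset:
  assumes "bregman_assumption \<phi>"
  shows "{0<..<1} \<subseteq> interior (edom \<phi>)"
  using assms unfolding bregman_assumption_def by blast

lemma bregman_ereal_rphi:
  assumes "bregman_assumption \<phi>" "x \<in> edom \<phi>"
  shows "\<phi> x = ereal (rphi \<phi> x)"
proof -
  have "\<phi> x \<noteq> -\<infinity>" using assms(1)
    unfolding bregman_assumption_def legendre_type_def proper_fun_def by auto
  moreover have "\<phi> x \<noteq> \<infinity>" using assms(2) unfolding edom_def by auto
  ultimately show ?thesis unfolding rphi_def by (cases "\<phi> x") auto
qed

lemma bregman_convex_on_rphi:
  assumes B: "bregman_assumption \<phi>"
  shows "convex_on (edom \<phi>) (rphi \<phi>)"
proof (rule convex_onI[OF _ bregman_convex_edom[OF B]])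
  fix t x y :: real
  assume t: "0 < t" "t < 1" and x: "x \<in> edom \<phi>" and y: "y \<in> edom \<phi>"
  define E where "E = {(x, r::real). \<phi> x \<le> ereal r}"
  have "convex E"
    using B unfolding E_def bregman_assumption_def legendre_type_def convex_fun_def by auto
  moreover have "(x, rphi \<phi> x) \<in> E" "(y, rphi \<phi> y) \<in> E"
    using bregman_ereal_rphi[OF B x] bregman_ereal_rphi[OF B y] unfolding E_def by auto
  ultimately have "(1 - t) *\<^sub>R (x, rphi \<phi> x) + t *\<^sub>R (y, rphi \<phi> y) \<in> E"
    using t by (intro convexD) auto
  then have le: "\<phi> ((1 - t) * x + t * y) \<le> ereal ((1 - t) * rphi \<phi> x + t * rphi \<phi> y)"
    unfolding E_def by simp
  then have "(1 - t) * x + t * y \<in> edom \<phi>" unfolding edom_def by auto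
  with le show "rphi \<phi> ((1 - t) *\<^sub>R x + t *\<^sub>R y) \<le> (1 - t) * rphi \<phi> x + t * rphi \<phi> y"
    by (simp add: bregman_ereal_rphi[OF B])
qed

lemma bregman_has_real_derivative:
  assumes "bregman_assumption \<phi>" "x \<in> interior (edom \<phi>)"
  shows "(rphi \<phi> has_real_derivative deriv (rphi \<phi>) x) (at x)"
  using assms unfolding bregman_assumption_def by (simp add: DERIV_deriv_iff_real_differentiable)

lemma bregman_strict_above_tangent:
  assumes B: "bregman_assumption \<phi>" and "x \<in> interior (edom \<phi>)" "y \<in> edom \<phi>" "y \<noteq> x"
  shows "deriv (rphi \<phi>) x * (y - x) < rphi \<phi> y - rphi \<phi> x"
proof (rule convex_on_strict_above_tangent[OF bregman_convex_on_rphi[OF B] bregman_convex_edom[OF B]])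
  show "\<And>a b u. a \<in> interior (edom \<phi>) \<Longrightarrow> b \<in> interior (edom \<phi>) \<Longrightarrow> a \<noteq> b \<Longrightarrow> 0 < u \<Longrightarrow> u < 1 \<Longrightarrow>
          rphi \<phi> (u * a + (1 - u) * b) < u * rphi \<phi> a + (1 - u) * rphi \<phi> b"
    using B unfolding bregman_assumption_def legendre_type_def strictly_convex_on_int_dom_def
    by blast
qed (use assms bregman_has_real_derivative in auto)

lemma bregman_mono_on_deriv:
  assumes B: "bregman_assumption \<phi>"
  shows "mono_on (interior (edom \<phi>)) (deriv (rphi \<phi>))"
proof (rule mono_onI)
  fix x y assume x: "x \<in> interior (edom \<phi>)" and y: "y \<in> interior (edom \<phi>)" and "x \<le> y"
  then show "deriv (rphi \<phi>) x \<le> deriv (rphi \<phi>) y"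
    using convex_on_deriv_mono[OF bregman_convex_on_rphi[OF B] bregman_convex_edom[OF B]]
      bregman_has_real_derivative[OF B x] bregman_has_real_derivative[OF B y] by blast
qed

lemma bregman_abs_deriv_tendsto_at_top:
  assumes B: "bregman_assumption \<phi>"
    and b: "b \<in> {0..1}" "b \<notin> interior (edom \<phi>)"
    and s: "\<And>k. s k \<in> {0<..<1}" "s \<longlonglongrightarrow> b"
  shows "filterlim (\<lambda>k. \<bar>deriv (rphi \<phi>) (s k)\<bar>) at_top sequentially"
proof -
  note sub = bregman_open_unit_interval_subset[OF B]
  then have "closure {0<..<1::real} \<subseteq> closure (edom \<phi>)"
    using interior_subset by (intro closure_mono) blast
  with b have "b \<in> frontier (edom \<phi>)" unfolding frontier_def by auto
  with B s sub show ?thesis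
    unfolding bregman_assumption_def legendre_type_def essentially_smooth_def by blast
qed

lemma bregman_zero_in_interior:
  assumes B: "bregman_assumption \<phi>" and "dphi0 \<phi> \<noteq> -\<infinity>"
  shows "0 \<in> interior (edom \<phi>)"
proof (rule ccontr)
  assume boundary: "0 \<notin> interior (edom \<phi>)"
  from bregman_open_unit_interval_subset[OF B]
  have "filterlim (deriv (rphi \<phi>)) at_bot (at_right 0)"
    by (rule mono_on_tendsto_at_bot_at_right[OF mono_on_subset[OF bregman_mono_on_deriv[OF B]]])
      (auto intro: bregman_abs_deriv_tendsto_at_top[OF B _ boundary])
  then have "((\<lambda>x. ereal (deriv (rphi \<phi>) x)) \<longlongrightarrow> -\<infinity>) (at_right 0)"
    unfolding tendsto_MInfty filterlim_at_bot_dense by simp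
  then have "dphi0 \<phi> = -\<infinity>"
    unfolding dphi0_def by (intro tendsto_Lim) simp_all
  with assms(2) show False by simp
qed

lemma bregman_one_in_interior:
  assumes B: "bregman_assumption \<phi>" and "dphi1 \<phi> \<noteq> \<infinity>"
  shows "1 \<in> interior (edom \<phi>)"
proof (rule ccontr)
  assume boundary: "1 \<notin> interior (edom \<phi>)"
  from bregman_open_unit_interval_subset[OF B]
  have "filterlim (deriv (rphi \<phi>)) at_top (at_left 1)"
    by (rule mono_on_tendsto_at_top_at_left[OF mono_on_subset[OF bregman_mono_on_deriv[OF B]]])
      (auto intro: bregman_abs_deriv_tendsto_at_top[OF B _ boundary])
  then have "((\<lambda>x. ereal (deriv (rphi \<phi>) x)) \<longlongrightarrow> \<infinity>) (at_left 1)"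
    by (simp add: tendsto_PInfty_eq_at_top)
  then have "dphi1 \<phi> = \<infinity>"
    unfolding dphi1_def by (intro tendsto_Lim) simp_all
  with assms(2) show False by simp
qed

lemma transport_polytope_entry_le_one:
  assumes "prob_vec \<mu>" "X \<in> transport_polytope \<mu> \<nu>"
  shows "X i j \<le> 1"
proof -
  have "X i j \<le> (\<Sum>j\<in>UNIV. X i j)"
    using assms(2) by (intro member_le_sum) (auto simp: transport_polytope_def)
  also have "\<dots> = \<mu> i" using assms(2) by (simp add: transport_polytope_def)
  also have "\<dots> \<le> (\<Sum>i\<in>UNIV. \<mu> i)"
    using assms(1) by (intro member_le_sum) (auto simp: prob_vec_def)
  also have "\<dots> = 1" using assms(1) by (simp add: prob_vec_def)
  finally show ?thesis .
qed

lemma transport_polytope_total_mass: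
  assumes "X \<in> transport_polytope \<mu> \<nu>"
  shows "(\<Sum>i\<in>UNIV. \<Sum>j\<in>UNIV. X i j) = (\<Sum>i\<in>UNIV. \<mu> i)"
  using assms by (simp add: transport_polytope_def)

lemma target_set_subset_transport_polytope:
  "target_set \<phi> \<mu> \<nu> \<subseteq> transport_polytope \<mu> \<nu>"
  unfolding target_set_def by auto

lemma target_set_entry_in_interior:
  assumes B: "bregman_assumption \<phi>" and "prob_vec \<mu>" and X: "X \<in> target_set \<phi> \<mu> \<nu>"
  shows "X i j \<in> interior (edom \<phi>)"
proof -
  have "X \<in> transport_polytope \<mu> \<nu>"
    using X target_set_subset_transport_polytope by blast
  then have "0 \<le> X i j" "X i j \<le> 1"
    using transport_polytope_entry_le_one[OF \<open>prob_vec \<mu>\<close>]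
    by (auto simp: transport_polytope_def)
  then consider "X i j = 0" | "X i j = 1" | "X i j \<in> {0<..<1}" by fastforce
  then show ?thesis
  proof cases
    case 1
    have "dphi0 \<phi> \<noteq> -\<infinity>"
      using X 1 unfolding target_set_def by (auto split: if_splits; metis less_irrefl)
    with 1 show ?thesis using bregman_zero_in_interior[OF B] by simp
  next
    case 2
    have "dphi1 \<phi> \<noteq> \<infinity>"
      using X 2 unfolding target_set_def by (auto split: if_splits; metis less_irrefl)
    with 2 show ?thesis using bregman_one_in_interior[OF B] by simp
  next
    case 3
    with bregman_open_unit_interval_subset[OF B] show ?thesis by blast
  qed
qed

lemma reg_obj_eq_ereal:
  assumes "bregman_assumption \<phi>" "\<And>i j. Y i j \<in> edom \<phi>"
  shows "reg_obj \<phi> \<gamma> C Y = ereal ((\<Sum>i\<in>UNIV. \<Sum>j\<in>UNIV. C i j * Y i j)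
      + \<gamma> * (\<Sum>i\<in>UNIV. \<Sum>j\<in>UNIV. rphi \<phi> (Y i j)))"
  using bregman_ereal_rphi[OF assms(1) assms(2)] by (simp add: reg_obj_def)

lemma reg_obj_eq_infinity:
  assumes "\<gamma> > 0" "Y i j \<notin> edom \<phi>"
  shows "reg_obj \<phi> \<gamma> C Y = \<infinity>"
proof -
  have "\<phi> (Y i j) = \<infinity>" using assms(2) by (simp add: edom_def)
  then have "(\<Sum>i\<in>UNIV. \<Sum>j\<in>UNIV. \<phi> (Y i j)) = \<infinity>" by (auto simp: sum_Pinfty)
  with assms(1) show ?thesis by (simp add: reg_obj_def)
qed

lemma Fmap_eqI:
  assumes "X \<in> transport_polytope \<mu> \<nu>"
    and "\<And>Y. Y \<in> transport_polytope \<mu> \<nu> \<Longrightarrow> Y \<noteq> X \<Longrightarrow> reg_obj \<phi> \<gamma> C X < reg_obj \<phi> \<gamma> C Y"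
  shows "Fmap \<phi> \<gamma> \<mu> \<nu> C = X"
  unfolding Fmap_def
proof (rule the_equality)
  show "X \<in> transport_polytope \<mu> \<nu> \<and> (\<forall>Y\<in>transport_polytope \<mu> \<nu>. reg_obj \<phi> \<gamma> C X \<le> reg_obj \<phi> \<gamma> C Y)"
    using assms by (metis order.order_iff_strict)
next
  fix Y assume "Y \<in> transport_polytope \<mu> \<nu> \<and>
    (\<forall>Z\<in>transport_polytope \<mu> \<nu>. reg_obj \<phi> \<gamma> C Y \<le> reg_obj \<phi> \<gamma> C Z)"
  with assms show "Y = X" by (meson leD)
qed

lemma reg_obj_strict_min_at_gradient_cost:
  fixes X Y :: "'n::finite \<Rightarrow> 'n \<Rightarrow> real" and K \<gamma> :: real and \<phi> :: "real \<Rightarrow> ereal"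
  defines "C \<equiv> \<lambda>i j. K - \<gamma> * deriv (rphi \<phi>) (X i j)"
  assumes B: "bregman_assumption \<phi>" and "\<gamma> > 0"
    and X: "X \<in> transport_polytope \<mu> \<nu>" "\<And>i j. X i j \<in> interior (edom \<phi>)"
    and Y: "Y \<in> transport_polytope \<mu> \<nu>" "Y \<noteq> X"
  shows "reg_obj \<phi> \<gamma> C X < reg_obj \<phi> \<gamma> C Y"
proof -
  let ?r = "rphi \<phi>" and ?d = "deriv (rphi \<phi>)"
  have X_dom: "X i j \<in> edom \<phi>" for i j using X(2) interior_subset by blast
  show ?thesis
  proof (cases "\<forall>i j. Y i j \<in> edom \<phi>")
    case False
    then obtain i j where "Y i j \<notin> edom \<phi>" by blast
    then show ?thesis
      by (simp add: reg_obj_eq_infinity[OF \<open>\<gamma> > 0\<close>] reg_obj_eq_ereal[OF B X_dom])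
  next
    case True
    define D where "D i j = ?r (Y i j) - ?r (X i j) - ?d (X i j) * (Y i j - X i j)" for i j
    have D_pos: "0 < D i j" if "Y i j \<noteq> X i j" for i j
      using bregman_strict_above_tangent[OF B X(2) _ that] True by (simp add: D_def)
    have D_nonneg: "0 \<le> D i j" for i j
      using D_pos[of i j] by (cases "Y i j = X i j") (auto simp: D_def)
    obtain i0 j0 where "Y i0 j0 \<noteq> X i0 j0" using Y(2) by blast
    then have "0 < (\<Sum>j\<in>UNIV. D i0 j)"
      using D_pos D_nonneg by (rule_tac sum_pos2[where i = j0]) auto
    then have "0 < (\<Sum>i\<in>UNIV. \<Sum>j\<in>UNIV. D i j)"
      using D_nonneg by (rule_tac sum_pos2[where i = i0]) (auto intro: sum_nonneg)
    have "(\<Sum>i\<in>UNIV. \<Sum>j\<in>UNIV. C i j * Y i j) + \<gamma> * (\<Sum>i\<in>UNIV. \<Sum>j\<in>UNIV. ?r (Y i j))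
        - ((\<Sum>i\<in>UNIV. \<Sum>j\<in>UNIV. C i j * X i j) + \<gamma> * (\<Sum>i\<in>UNIV. \<Sum>j\<in>UNIV. ?r (X i j)))
        = (\<Sum>i\<in>UNIV. \<Sum>j\<in>UNIV. K * (Y i j - X i j) + \<gamma> * D i j)"
      by (simp add: C_def D_def sum_subtractf sum.distrib sum_distrib_left algebra_simps)
    also have "\<dots> = K * ((\<Sum>i\<in>UNIV. \<Sum>j\<in>UNIV. Y i j) - (\<Sum>i\<in>UNIV. \<Sum>j\<in>UNIV. X i j))
        + \<gamma> * (\<Sum>i\<in>UNIV. \<Sum>j\<in>UNIV. D i j)"
      by (simp add: sum.distrib sum_distrib_left sum_subtractf right_diff_distrib)
    also have "\<dots> = \<gamma> * (\<Sum>i\<in>UNIV. \<Sum>j\<in>UNIV. D i j)"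
      using transport_polytope_total_mass[OF X(1)] transport_polytope_total_mass[OF Y(1)] by simp
    also have "\<dots> > 0"
      using \<open>0 < (\<Sum>i\<in>UNIV. \<Sum>j\<in>UNIV. D i j)\<close> \<open>\<gamma> > 0\<close> by simp
    finally show ?thesis
      using True by (simp add: reg_obj_eq_ereal[OF B X_dom] reg_obj_eq_ereal[OF B])
  qed
qed

theorem proposition1:
  fixes \<mu> \<nu> :: "'n::finite \<Rightarrow> real" and \<gamma> :: real and \<phi> :: "real \<Rightarrow> ereal"
  assumes "prob_vec \<mu>" and "prob_vec \<nu>" and "\<gamma> > 0"
    and "bregman_assumption \<phi>"
    and "Xh \<in> target_set \<phi> \<mu> \<nu>"
  shows "\<exists>C::'n \<Rightarrow> 'n \<Rightarrow> real. (\<forall>i j. 0 \<le> C i j) \<and> Fmap \<phi> \<gamma> \<mu> \<nu> C = Xh"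
proof -
  let ?d = "deriv (rphi \<phi>)"
  define K where "K = \<gamma> * (\<Sum>i\<in>UNIV. \<Sum>j\<in>UNIV. \<bar>?d (Xh i j)\<bar>)"
  define C where "C i j = K - \<gamma> * ?d (Xh i j)" for i j
  have XU: "Xh \<in> transport_polytope \<mu> \<nu>"
    using assms(5) target_set_subset_transport_polytope by blast
  have XI: "Xh i j \<in> interior (edom \<phi>)" for i j
    by (rule target_set_entry_in_interior[OF assms(4,1,5)])
  have "?d (Xh i j) \<le> (\<Sum>i\<in>UNIV. \<Sum>j\<in>UNIV. \<bar>?d (Xh i j)\<bar>)" for i j
    using abs_le_double_sum_abs[of "\<lambda>i j. ?d (Xh i j)" i j] by linarith
  then have "\<gamma> * ?d (Xh i j) \<le> K" for i j
    unfolding K_def using \<open>\<gamma> > 0\<close> by (simp add: mult_left_mono)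
  then have "\<forall>i j. 0 \<le> C i j" by (simp add: C_def)
  moreover have "Fmap \<phi> \<gamma> \<mu> \<nu> C = Xh"
    using reg_obj_strict_min_at_gradient_cost[OF assms(4,3) XU XI]
    by (intro Fmap_eqI[OF XU]) (simp add: C_def[abs_def])
  ultimately show ?thesis by blast
qed

end
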